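(* Let $(\mathfrak g,[\cdot,\cdot],\delta,n)$ be an NL bialgebra and $k\ge1$. Then $\delta_{({}^tn)^k}(\xi)=\iota_{({}^tn)^k}\delta(\xi)-\delta(n^k\xi)$ defines a 1-cocycle for $[\cdot,\cdot]$ if and only if $\delta$ is a 1-cocycle for the deformed bracket $[\cdot,\cdot]_{n^k}$.
   Context: $(\mathfrak g,[\cdot,\cdot])$ is a finite-dimensional real Lie algebra; $\langle\mathrm{ad}^*_\xi\eta,\zeta\rangle=-\langle\eta,[\xi,\zeta]\rangle$. Elements of $\wedge^2\mathfrak g$ are skew-symmetric bilinear forms on $\mathfrak g^*$; for linear $\phi:\mathfrak g^*\to\mathfrak g^*$, $(\iota_\phi P)(\eta_1,\eta_2)=P(\phi\eta_1,\eta_2)+P(\eta_1,\phi\eta_2)$; $\mathrm{ad}^{(2)}_\xi=\iota_{\mathrm{ad}^*_\xi}$. A linear $\delta:\mathfrak g\to\wedge^2\mathfrak g$ is a 1-cocycle for $[\cdot,\cdot]$ if $\mathrm{ad}^{(2)}_{\xi_1}\delta(\xi_2)-\mathrm{ad}^{(2)}_{\xi_2}\delta(\xi_1)-\delta([\xi_1,\xi_2])=0$; a Lie bialgebra $(\mathfrak g,[\cdot,\cdot],\delta)$ has such $\delta$ with dual bracket $\langle[\eta_1,\eta_2]_{\mathfrak g^*},\xi\rangle=\delta(\xi)(\eta_1,\eta_2)$ a Lie bracket. For linear $m:\mathfrak g\to\mathfrak g$, $[\xi_1,\xi_2]_m=[m\xi_1,\xi_2]+[\xi_1,m\xi_2]-m[\xi_1,\xi_2]$;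 $m$ is Nijenhuis if $m[\xi_1,\xi_2]_m=[m\xi_1,m\xi_2]$. ${}^tn$ is the transpose of $n$, $\underline{\mathrm{ad}}^*_{\,\xi}=[{}^tn,\mathrm{ad}^*_\xi]$. A 1-cocycle for $[\cdot,\cdot]_{n^k}$ is a linear $\delta'$ with $\iota_{A^k_{\xi_1}}\delta'(\xi_2)-\iota_{A^k_{\xi_2}}\delta'(\xi_1)-\delta'([\xi_1,\xi_2]_{n^k})=0$, where $A^k_\xi=[({}^tn)^k,\mathrm{ad}^*_\xi]+\mathrm{ad}^*_{n^k\xi}$. An NL bialgebra $(\mathfrak g,[\cdot,\cdot],\delta,n)$ is a Lie bialgebra with a Nijenhuis operator $n$ on $\mathfrak g$ such that (1) $\delta$ is a 1-cocycle for $[\cdot,\cdot]_n$; (2) ${}^tn$ is Nijenhuis on $(\mathfrak g^*,[\cdot,\cdot]_{\mathfrak g^*})$, i.e. ${}^tn([{}^tn\eta_1,\eta_2]_{\mathfrak g^*}+[\eta_1,{}^tn\eta_2]_{\mathfrak g^*}-{}^tn[\eta_1,\eta_2]_{\mathfrak g^*})=[{}^tn\eta_1,{}^tn\eta_2]_{\mathfrak g^*}$; (3) $C(\delta,n)=0$, meaning $\iota_{{}^tn\circ\underline{\mathrm{ad}}^*_{\xi_1}}\delta(\xi_2)-\iota_{{}^tn\circ\underline{\mathrm{ad}}^*_{\xi_2}}\delta(\xi_1)=\iota_{\underline{\mathrm{ad}}^*_{\xi_1}}\delta(n\xi_2)-\iota_{\underline{\mathrm{ad}}^*_{\xi_2}}\delta(n\xi_1)$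 for all $\xi_1,\xi_2$. *)

theory Defs
  imports "HOL-Analysis.Analysis"
begin

text \<open>The finite-dimensional real Lie algebra g is a type 'g of class
  euclidean_space. Its dual space g* is represented by the same type 'g, with the
  canonical pairing  <eta, xi> = eta \<bullet> xi  (inner product); this is a linear
  isomorphism g* = g, so nothing is lost. Transposes of linear maps are then
  adjoints w.r.t. the pairing.  Elements of wedge^2 g are skew-symmetric bilinear
  forms on g*, i.e. functions 'g => 'g => real.\<close>

definition lie_algebra :: "('g::euclidean_space \<Rightarrow> 'g \<Rightarrow> 'g) \<Rightarrow> bool" where
  "lie_algebra br \<longleftrightarrow> bilinear br \<and> (\<forall>x y. br x y = - br y x)
     \<and> (\<forall>x y z. br x (br y z) + br y (br z x) + br z (br x y) = 0)"

definition transp :: "('g::euclidean_space \<Rightarrow> 'g) \<Rightarrow> 'g \<Rightarrow> 'g" where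
  "transp n = adjoint n"

definition coad :: "('g::euclidean_space \<Rightarrow> 'g \<Rightarrow> 'g) \<Rightarrow> 'g \<Rightarrow> 'g \<Rightarrow> 'g" where
  "coad br xi = adjoint (\<lambda>zeta. - br xi zeta)"

definition wedge2 :: "('g::euclidean_space \<Rightarrow> 'g \<Rightarrow> real) \<Rightarrow> bool" where
  "wedge2 P \<longleftrightarrow> bilinear P \<and> (\<forall>a b. P a b = - P b a)"

definition iota :: "('g \<Rightarrow> 'g) \<Rightarrow> ('g \<Rightarrow> 'g \<Rightarrow> real) \<Rightarrow> 'g \<Rightarrow> 'g \<Rightarrow> real" where
  "iota phi P eta1 eta2 = P (phi eta1) eta2 + P eta1 (phi eta2)"

definition comm :: "('g::real_vector \<Rightarrow> 'g) \<Rightarrow> ('g \<Rightarrow> 'g) \<Rightarrow> 'g \<Rightarrow> 'g" where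
  "comm f g = (\<lambda>x. f (g x) - g (f x))"

definition linear_delta :: "('g::euclidean_space \<Rightarrow> 'g \<Rightarrow> 'g \<Rightarrow> real) \<Rightarrow> bool" where
  "linear_delta delta \<longleftrightarrow> (\<forall>a b x y eta1 eta2.
      delta (a *\<^sub>R x + b *\<^sub>R y) eta1 eta2 = a * delta x eta1 eta2 + b * delta y eta1 eta2)"

definition cocycle_wrt :: "('g \<Rightarrow> 'g \<Rightarrow> 'g) \<Rightarrow> ('g \<Rightarrow> 'g \<Rightarrow> 'g) \<Rightarrow> ('g \<Rightarrow> 'g \<Rightarrow> 'g \<Rightarrow> real) \<Rightarrow> bool" where
  "cocycle_wrt A b delta \<longleftrightarrow> (\<forall>x1 x2 eta1 eta2.
      iota (A x1) (delta x2) eta1 eta2 - iota (A x2) (delta x1) eta1 eta2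
        - delta (b x1 x2) eta1 eta2 = 0)"

text \<open>1-cocycle for [.,.]: uses ad^(2)_xi = iota_{ad*_xi}\<close>
definition cocycle :: "('g::euclidean_space \<Rightarrow> 'g \<Rightarrow> 'g) \<Rightarrow> ('g \<Rightarrow> 'g \<Rightarrow> 'g \<Rightarrow> real) \<Rightarrow> bool" where
  "cocycle br delta \<longleftrightarrow> linear_delta delta \<and> cocycle_wrt (coad br) br delta"

definition deformed :: "('g::real_vector \<Rightarrow> 'g \<Rightarrow> 'g) \<Rightarrow> ('g \<Rightarrow> 'g) \<Rightarrow> 'g \<Rightarrow> 'g \<Rightarrow> 'g" where
  "deformed br m x1 x2 = br (m x1) x2 + br x1 (m x2) - m (br x1 x2)"

definition nijenhuis :: "('g::real_vector \<Rightarrow> 'g \<Rightarrow> 'g) \<Rightarrow> ('g \<Rightarrow> 'g) \<Rightarrow> bool" where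
  "nijenhuis br m \<longleftrightarrow> linear m \<and> (\<forall>x1 x2. m (deformed br m x1 x2) = br (m x1) (m x2))"

definition Aop :: "('g::euclidean_space \<Rightarrow> 'g \<Rightarrow> 'g) \<Rightarrow> ('g \<Rightarrow> 'g) \<Rightarrow> nat \<Rightarrow> 'g \<Rightarrow> 'g \<Rightarrow> 'g" where
  "Aop br n k xi = (\<lambda>eta. comm (transp n ^^ k) (coad br xi) eta + coad br ((n ^^ k) xi) eta)"

definition cocycle_deformed :: "('g::euclidean_space \<Rightarrow> 'g \<Rightarrow> 'g) \<Rightarrow> ('g \<Rightarrow> 'g) \<Rightarrow> nat
     \<Rightarrow> ('g \<Rightarrow> 'g \<Rightarrow> 'g \<Rightarrow> real) \<Rightarrow> bool" where
  "cocycle_deformed br n k delta \<longleftrightarrow> linear_delta delta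
      \<and> cocycle_wrt (Aop br n k) (deformed br (n ^^ k)) delta"

text \<open>dual bracket on g*:  <[eta1,eta2]_*, xi> = delta(xi)(eta1,eta2)\<close>
definition dual_br :: "('g::euclidean_space \<Rightarrow> 'g \<Rightarrow> 'g \<Rightarrow> real) \<Rightarrow> 'g \<Rightarrow> 'g \<Rightarrow> 'g" where
  "dual_br delta eta1 eta2 = (\<Sum>b\<in>Basis. delta b eta1 eta2 *\<^sub>R b)"

definition lie_bialgebra :: "('g::euclidean_space \<Rightarrow> 'g \<Rightarrow> 'g) \<Rightarrow> ('g \<Rightarrow> 'g \<Rightarrow> 'g \<Rightarrow> real) \<Rightarrow> bool" where
  "lie_bialgebra br delta \<longleftrightarrow> lie_algebra br \<and> (\<forall>x. wedge2 (delta x)) \<and> cocycle br delta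
      \<and> lie_algebra (dual_br delta)"

definition uad :: "('g::euclidean_space \<Rightarrow> 'g \<Rightarrow> 'g) \<Rightarrow> ('g \<Rightarrow> 'g) \<Rightarrow> 'g \<Rightarrow> 'g \<Rightarrow> 'g" where
  "uad br n xi = comm (transp n) (coad br xi)"

definition C_zero :: "('g::euclidean_space \<Rightarrow> 'g \<Rightarrow> 'g) \<Rightarrow> ('g \<Rightarrow> 'g \<Rightarrow> 'g \<Rightarrow> real) \<Rightarrow> ('g \<Rightarrow> 'g) \<Rightarrow> bool" where
  "C_zero br delta n \<longleftrightarrow> (\<forall>x1 x2 eta1 eta2.
      iota (transp n \<circ> uad br n x1) (delta x2) eta1 eta2 - iota (transp n \<circ> uad br n x2) (delta x1) eta1 eta2
      = iota (uad br n x1) (delta (n x2)) eta1 eta2 - iota (uad br n x2) (delta (n x1)) eta1 eta2)"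

definition NL_bialgebra :: "('g::euclidean_space \<Rightarrow> 'g \<Rightarrow> 'g) \<Rightarrow> ('g \<Rightarrow> 'g \<Rightarrow> 'g \<Rightarrow> real) \<Rightarrow> ('g \<Rightarrow> 'g) \<Rightarrow> bool" where
  "NL_bialgebra br delta n \<longleftrightarrow> lie_bialgebra br delta \<and> nijenhuis br n
      \<and> cocycle_deformed br n 1 delta
      \<and> nijenhuis (dual_br delta) (transp n)
      \<and> C_zero br delta n"

definition delta_tnk :: "('g::euclidean_space \<Rightarrow> 'g \<Rightarrow> 'g \<Rightarrow> real) \<Rightarrow> ('g \<Rightarrow> 'g) \<Rightarrow> nat \<Rightarrow> 'g \<Rightarrow> 'g \<Rightarrow> 'g \<Rightarrow> real" where
  "delta_tnk delta n k xi eta1 eta2 = iota (transp n ^^ k) (delta xi) eta1 eta2 - delta ((n ^^ k) xi) eta1 eta2"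

end

theory Submission
  imports Defs
begin

text \<open>For arbitrary linear N on g* and m on g, put delta'(x) = iota N (delta x) - delta (m x).
  Expanding, the defect of the cocycle identity of delta' for [.,.] equals the defect of the
  cocycle identity of delta for the operators [N, ad*_x] + ad*_(m x) and the bracket [.,.]_m,
  plus four instances of the cocycle identity of delta for [.,.], which vanish. Taking
  N = (tn)^k and m = n^k gives the theorem.\<close>

definition twist :: "('g \<Rightarrow> 'g) \<Rightarrow> ('g \<Rightarrow> 'g) \<Rightarrow> ('g \<Rightarrow> 'g \<Rightarrow> 'g \<Rightarrow> real) \<Rightarrow> 'g \<Rightarrow> 'g \<Rightarrow> 'g \<Rightarrow> real"
  where "twist N m delta x eta1 eta2 = iota N (delta x) eta1 eta2 - delta (m x) eta1 eta2"

lemma delta_tnk_eq_twist: "delta_tnk delta n k = twist (transp n ^^ k) (n ^^ k) delta"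
  by (simp add: fun_eq_iff delta_tnk_def twist_def)

lemma Aop_eq: "Aop br n k = (\<lambda>x eta. comm (transp n ^^ k) (coad br x) eta + coad br ((n ^^ k) x) eta)"
  by (simp add: fun_eq_iff Aop_def)

lemma linear_funpow:
  fixes f :: "'a::real_vector \<Rightarrow> 'a"
  assumes "linear f"
  shows "linear (f ^^ k)"
  using assms by (induction k) (simp_all add: linear_id linear_compose)

lemma linear_delta_add:
  assumes "linear_delta delta"
  shows "delta (x + y) a b = delta x a b + delta y a b"
  using assms unfolding linear_delta_def by (metis scaleR_one mult_1)

lemma linear_delta_diff:
  assumes "linear_delta delta"
  shows "delta (x - y) a b = delta x a b - delta y a b"
  using assms unfolding linear_delta_def
  by (metis (no_types, opaque_lifting) diff_conv_add_uminus mult_minus_left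
      scaleR_minus1_left scaleR_one mult_1)

lemma linear_delta_twist:
  assumes "linear_delta delta" and "linear m"
  shows "linear_delta (twist N m delta)"
  unfolding linear_delta_def twist_def iota_def
  using assms unfolding linear_delta_def
  by (simp add: linear_add linear_scale algebra_simps)

lemma cocycle_defect_twist:
  fixes br :: "'g::euclidean_space \<Rightarrow> 'g \<Rightarrow> 'g"
  assumes bil: "\<And>x. bilinear (delta x)"
    and ld: "linear_delta delta"
    and coc: "cocycle_wrt (coad br) br delta"
  shows "iota (coad br x1) (twist N m delta x2) e1 e2
       - iota (coad br x2) (twist N m delta x1) e1 e2
       - twist N m delta (br x1 x2) e1 e2
     = iota (\<lambda>eta. comm N (coad br x1) eta + coad br (m x1) eta) (delta x2) e1 e2
       - iota (\<lambda>eta. comm N (coad br x2) eta + coad br (m x2) eta) (delta x1) e1 e2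
       - delta (deformed br m x1 x2) e1 e2"
proof -
  have C: "iota (coad br x) (delta y) a b - iota (coad br y) (delta x) a b - delta (br x y) a b = 0"
    for x y a b
    using coc unfolding cocycle_wrt_def by blast
  \<comment> \<open>the cocycle condition enters at the four pairs that the twist produces\<close>
  note used = C[of x1 x2 "N e1" e2] C[of x1 x2 e1 "N e2"] C[of "m x1" x2 e1 e2] C[of x1 "m x2" e1 e2]
  have bilinear_rules:
    "delta x (u + v) w = delta x u w + delta x v w" "delta x (u - v) w = delta x u w - delta x v w"
    "delta x w (u + v) = delta x w u + delta x w v" "delta x w (u - v) = delta x w u - delta x w v"
    for x u v w
    using bil bilinear_ladd bilinear_lsub bilinear_radd bilinear_rsub by blast+
  show ?thesis
    using used unfolding twist_def iota_def comm_def deformed_def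
    by (simp add: linear_delta_add[OF ld] linear_delta_diff[OF ld] bilinear_rules algebra_simps)
qed

lemma cocycle_twist_iff:
  fixes br :: "'g::euclidean_space \<Rightarrow> 'g \<Rightarrow> 'g"
  assumes "cocycle br delta" and "\<And>x. bilinear (delta x)" and "linear m"
  shows "cocycle br (twist N m delta)
     \<longleftrightarrow> cocycle_wrt (\<lambda>x eta. comm N (coad br x) eta + coad br (m x) eta) (deformed br m) delta"
proof -
  have ld: "linear_delta delta" and coc: "cocycle_wrt (coad br) br delta"
    using assms(1) unfolding cocycle_def by auto
  have "cocycle_wrt (coad br) br (twist N m delta)
     \<longleftrightarrow> cocycle_wrt (\<lambda>x eta. comm N (coad br x) eta + coad br (m x) eta) (deformed br m) delta"
    unfolding cocycle_wrt_def using cocycle_defect_twist[OF assms(2) ld coc] by simp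
  then show ?thesis
    unfolding cocycle_def using linear_delta_twist[OF ld assms(3)] by blast
qed

theorem mainTheorem12:
  fixes br :: "'g::euclidean_space \<Rightarrow> 'g \<Rightarrow> 'g"
    and delta :: "'g \<Rightarrow> 'g \<Rightarrow> 'g \<Rightarrow> real"
    and n :: "'g \<Rightarrow> 'g"
    and k :: nat
  assumes "NL_bialgebra br delta n"
    and "k \<ge> 1"
  shows "cocycle br (delta_tnk delta n k) \<longleftrightarrow> cocycle_deformed br n k delta"
proof -
  have bialg: "lie_bialgebra br delta" and "linear n"
    using assms(1) unfolding NL_bialgebra_def nijenhuis_def by auto
  then have coc: "cocycle br delta" and bil: "\<And>x. bilinear (delta x)"
    unfolding lie_bialgebra_def wedge2_def by auto
  then have "linear_delta delta" unfolding cocycle_def by blast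
  with cocycle_twist_iff[OF coc bil linear_funpow[OF \<open>linear n\<close>]] show ?thesis
    unfolding delta_tnk_eq_twist cocycle_deformed_def Aop_eq by blast
qed

end
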